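(* Let $\Omega\subset\mathbb{R}^n$ be a domain with $\mathrm{width}(\Omega)<+\infty$, $f\in L^\infty(\Omega)$, $g\in C(\partial\Omega)\cap L^\infty(\partial\Omega)$, $(\varepsilon_i)$ a sequence of positive numbers with $\varepsilon_i\to0$, and for each $i$ let $u_i:\overline\Omega\to\mathbb{R}$ be a bounded solution of $\Delta^{\varepsilon_i}_\infty u_i=\varepsilon_i^2 f$ in $\Omega$, $u_i=g$ on $\partial\Omega$. Then the functions $u_i$ are uniformly bounded, i.e. $\sup_i\sup_{\overline\Omega}|u_i|<+\infty$.
   Context: $d(x,y)$ is the intrinsic metric of $\overline\Omega$ (infimum of lengths of paths in $\overline\Omega$ from $x$ to $y$); $\mathrm{width}(\Omega)=\sup_{x\in\Omega}\inf_{y\in\partial\Omega}d(y,x)$. For $\varepsilon>0$, $B_x(\varepsilon)=\{y\in\overline\Omega: d(x,y)<\varepsilon\}$ and $\Delta^{\varepsilon}_\infty w(x)=\inf_{y\in B_x(\varepsilon)}w(y)+\sup_{y\in B_x(\varepsilon)}w(y)-2w(x)$. *)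

theory Defs
  imports "HOL-Analysis.Analysis"
begin

definition path_length :: "(real \<Rightarrow> 'a::real_normed_vector) \<Rightarrow> ereal" where
  "path_length \<gamma> =
     (SUP p \<in> {(n::nat, t::nat \<Rightarrow> real). t 0 = 0 \<and> t n = 1 \<and> (\<forall>k<n. t k \<le> t (Suc k))}.
        ereal (\<Sum>k<fst p. norm (\<gamma> (snd p (Suc k)) - \<gamma> (snd p k))))"

text \<open>Intrinsic metric of the closure of \<Omega>: infimum of lengths of paths in
  closure \<Omega> from x to y (infinite if there is no such path of finite length).\<close>
definition intrinsic_dist :: "'a::euclidean_space set \<Rightarrow> 'a \<Rightarrow> 'a \<Rightarrow> ereal" where
  "intrinsic_dist \<Omega> x y =
     (INF \<gamma> \<in> {\<gamma>. path \<gamma> \<and> path_image \<gamma> \<subseteq> closure \<Omega> \<and> pathstart \<gamma> = x \<and> pathfinish \<gamma> = y}.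
        path_length \<gamma>)"

definition width :: "'a::euclidean_space set \<Rightarrow> ereal" where
  "width \<Omega> = (SUP x \<in> \<Omega>. INF y \<in> frontier \<Omega>. intrinsic_dist \<Omega> y x)"

definition intr_ball :: "'a::euclidean_space set \<Rightarrow> 'a \<Rightarrow> real \<Rightarrow> 'a set" where
  "intr_ball \<Omega> x \<epsilon> = {y \<in> closure \<Omega>. intrinsic_dist \<Omega> x y < ereal \<epsilon>}"

definition eps_laplacian :: "'a::euclidean_space set \<Rightarrow> real \<Rightarrow> ('a \<Rightarrow> real) \<Rightarrow> 'a \<Rightarrow> real" where
  "eps_laplacian \<Omega> \<epsilon> w x =
     (INF y \<in> intr_ball \<Omega> x \<epsilon>. w y) + (SUP y \<in> intr_ball \<Omega> x \<epsilon>. w y) - 2 * w x"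

end

theory Submission
  imports Defs
begin

text \<open>
  Cutting a nearly shortest path from the boundary into pieces of length \<open>\<epsilon>/2\<close> (possible
  because the arc length \<open>s \<mapsto> variation \<gamma> 0 s\<close> of a rectifiable path is continuous) shows that
  every point of the closure reaches the boundary through at most \<open>K \<approx> 2 width / \<epsilon>\<close> points
  whose consecutive intrinsic distances are below \<open>\<epsilon>\<close>. Let \<open>N x\<close> be the least number of such
  steps. The barrier \<open>v = \<phi> \<circ> N\<close> with \<open>\<phi> k = c k (2K + 2 - k)\<close> has second difference
  \<open>-2c\<close>, so if \<open>\<Delta>\<^sup>\<epsilon>\<^sub>\<infinity> u \<ge> -\<epsilon>\<^sup>2 F\<close> and \<open>c > \<epsilon>\<^sup>2 F\<close>, then \<open>u - v\<close> cannot be almost maximal at an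
  interior point. Hence \<open>u \<le> sup g + c (K + 1)\<^sup>2\<close>, and with \<open>c = \<epsilon>\<^sup>2 (F + 1)\<close> this bound is
  \<open>O((width + \<epsilon>)\<^sup>2)\<close>, uniformly in \<open>\<epsilon>\<close>.
\<close>

definition polygon_length :: "(real \<Rightarrow> 'a::real_normed_vector) \<Rightarrow> nat \<Rightarrow> (nat \<Rightarrow> real) \<Rightarrow> real" where
  "polygon_length \<gamma> n p = (\<Sum>k<n. norm (\<gamma> (p (Suc k)) - \<gamma> (p k)))"

definition is_partition :: "real \<Rightarrow> real \<Rightarrow> nat \<Rightarrow> (nat \<Rightarrow> real) \<Rightarrow> bool" where
  "is_partition a b n p \<longleftrightarrow> p 0 = a \<and> p n = b \<and> (\<forall>k<n. p k \<le> p (Suc k))"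

definition polygon_lengths :: "(real \<Rightarrow> 'a::real_normed_vector) \<Rightarrow> real \<Rightarrow> real \<Rightarrow> real set" where
  "polygon_lengths \<gamma> a b = {polygon_length \<gamma> n p |n p. is_partition a b n p}"

text \<open>Meaningful only for a rectifiable \<open>\<gamma>\<close> and \<open>0 \<le> a \<le> b \<le> 1\<close>; otherwise the supremum is
  taken over an empty or unbounded set and its value is unspecified.\<close>

definition variation :: "(real \<Rightarrow> 'a::real_normed_vector) \<Rightarrow> real \<Rightarrow> real \<Rightarrow> real" where
  "variation \<gamma> a b = Sup (polygon_lengths \<gamma> a b)"

definition concat_partition :: "nat \<Rightarrow> (nat \<Rightarrow> real) \<Rightarrow> (nat \<Rightarrow> real) \<Rightarrow> nat \<Rightarrow> real" where
  "concat_partition n p q = (\<lambda>k. if k \<le> n then p k else q (k - n))"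

lemma polygon_length_nonneg: "0 \<le> polygon_length \<gamma> n p"
  unfolding polygon_length_def by (simp add: sum_nonneg)

lemma is_partition_mono:
  assumes "is_partition a b n p" "i \<le> j" "j \<le> n"
  shows "p i \<le> p j"
  using assms(2,3)
proof (induction j rule: dec_induct)
  case (step k)
  then have "p k \<le> p (Suc k)" using assms(1) unfolding is_partition_def by (simp add: Suc_le_lessD)
  with step show ?case by simp
qed simp

lemma is_partition_range: "is_partition a b n p \<Longrightarrow> i \<le> n \<Longrightarrow> a \<le> p i \<and> p i \<le> b"
  using is_partition_mono[of a b n p 0 i] is_partition_mono[of a b n p i n]
  unfolding is_partition_def by auto

lemma is_partition_trivial: "a \<le> b \<Longrightarrow> is_partition a b 1 (\<lambda>k. if k = 0 then a else b)"
  unfolding is_partition_def by auto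

lemma is_partition_concat:
  assumes "is_partition a b n p" "is_partition b c m q"
  shows "is_partition a c (n + m) (concat_partition n p q)"
  unfolding is_partition_def
proof (intro conjI allI impI)
  show "concat_partition n p q 0 = a" "concat_partition n p q (n + m) = c"
    using assms unfolding is_partition_def concat_partition_def by (cases m; simp)+
  fix k assume "k < n + m"
  then show "concat_partition n p q k \<le> concat_partition n p q (Suc k)"
    using assms unfolding is_partition_def concat_partition_def
    by (cases "Suc k \<le> n") (auto simp: Suc_diff_le not_less_eq_eq)
qed

lemma polygon_length_concat:
  assumes "is_partition a b n p" "is_partition b c m q"
  shows "polygon_length \<gamma> (n + m) (concat_partition n p q) = polygon_length \<gamma> n p + polygon_length \<gamma> m q"
proof (induction m)
  case 0
  show ?case unfolding polygon_length_def concat_partition_def by (auto intro: sum.cong)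
next
  case (Suc m)
  have "concat_partition n p q (Suc (n + m)) = q (Suc m)" "concat_partition n p q (n + m) = q m"
    using assms unfolding concat_partition_def is_partition_def by (cases m; auto simp: Suc_diff_le)+
  then show ?case using Suc unfolding polygon_length_def by simp
qed

lemma path_length_eq_SUP: "path_length \<gamma> = (SUP l \<in> polygon_lengths \<gamma> 0 1. ereal l)"
proof -
  define S where "S = {(n, p :: nat \<Rightarrow> real). p 0 = 0 \<and> p n = 1 \<and> (\<forall>k<n. p k \<le> p (Suc k))}"
  have "polygon_lengths \<gamma> 0 1 = (\<lambda>(n, p). polygon_length \<gamma> n p) ` S"
    unfolding polygon_lengths_def is_partition_def S_def by auto
  moreover have "path_length \<gamma> = (SUP x \<in> S. ereal (polygon_length \<gamma> (fst x) (snd x)))"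
    unfolding path_length_def polygon_length_def S_def ..
  ultimately show ?thesis by (simp add: image_image case_prod_beta)
qed

lemma polygon_length_le_path_length:
  assumes "0 \<le> a" "b \<le> 1" "is_partition a b n p"
  shows "ereal (polygon_length \<gamma> n p) \<le> path_length \<gamma>"
proof -
  let ?p0 = "\<lambda>k::nat. if k = 0 then 0 else a" and ?p1 = "\<lambda>k::nat. if k = 0 then b else 1"
  have P0: "is_partition 0 a 1 ?p0" by (rule is_partition_trivial) (rule assms(1))
  have P1: "is_partition b 1 1 ?p1" by (rule is_partition_trivial) (rule assms(2))
  have P: "is_partition 0 b (1 + n) (concat_partition 1 ?p0 p)"
    using is_partition_concat[OF P0 assms(3)] .
  let ?q = "concat_partition (1 + n) (concat_partition 1 ?p0 p) ?p1"
  have "polygon_length \<gamma> n p \<le> polygon_length \<gamma> 1 ?p0 + polygon_length \<gamma> n p + polygon_length \<gamma> 1 ?p1"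
    using polygon_length_nonneg[of \<gamma>] by (simp add: add_increasing)
  also have "\<dots> = polygon_length \<gamma> (1 + n + 1) ?q"
    using polygon_length_concat[OF P P1, of \<gamma>] polygon_length_concat[OF P0 assms(3), of \<gamma>] by linarith
  finally have "ereal (polygon_length \<gamma> n p) \<le> ereal (polygon_length \<gamma> (1 + n + 1) ?q)"
    by simp
  also have "\<dots> \<le> path_length \<gamma>"
    unfolding path_length_eq_SUP polygon_lengths_def
    using is_partition_concat[OF P P1] by (intro SUP_upper) blast
  finally show ?thesis .
qed

lemma bdd_above_polygon_lengths:
  assumes "path_length \<gamma> < \<infinity>" "0 \<le> a" "b \<le> 1"
  shows "bdd_above (polygon_lengths \<gamma> a b)"
proof -
  obtain L :: nat where "path_length \<gamma> < ereal (real L)"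
    using assms(1) less_PInf_Ex_of_nat[of "path_length \<gamma>"] by auto
  moreover have "ereal l \<le> path_length \<gamma>" if "l \<in> polygon_lengths \<gamma> a b" for l
    using that polygon_length_le_path_length[OF assms(2,3)] unfolding polygon_lengths_def by blast
  ultimately have "l \<le> real L" if "l \<in> polygon_lengths \<gamma> a b" for l
    using that by (metis ereal_less_eq(3) less_imp_le order.strict_trans1)
  then show ?thesis by (rule bdd_aboveI)
qed

lemma polygon_length_le_variation:
  assumes "path_length \<gamma> < \<infinity>" "0 \<le> a" "b \<le> 1" "is_partition a b n p"
  shows "polygon_length \<gamma> n p \<le> variation \<gamma> a b"
  unfolding variation_def using assms bdd_above_polygon_lengths[OF assms(1-3)]
  by (intro cSup_upper) (auto simp: polygon_lengths_def)

lemma variation_le: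
  assumes "a \<le> b" "\<And>n p. is_partition a b n p \<Longrightarrow> polygon_length \<gamma> n p \<le> c"
  shows "variation \<gamma> a b \<le> c"
  unfolding variation_def polygon_lengths_def using assms is_partition_trivial[OF assms(1)]
  by (intro cSup_least) blast+

lemma variation_nonneg:
  assumes "path_length \<gamma> < \<infinity>" "0 \<le> a" "a \<le> b" "b \<le> 1"
  shows "0 \<le> variation \<gamma> a b"
  using polygon_length_le_variation[OF assms(1,2,4) is_partition_trivial[OF assms(3)]]
    polygon_length_nonneg order_trans by blast

lemma variation_refl: "variation \<gamma> a a = 0"
proof -
  have "polygon_length \<gamma> n p = 0" if "is_partition a a n p" for n p
  proof -
    have "p k = a" if "k \<le> n" for k using is_partition_range[OF \<open>is_partition a a n p\<close> that] by simp
    then show ?thesis unfolding polygon_length_def by simp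
  qed
  moreover have "is_partition a a 1 (\<lambda>_. a)" unfolding is_partition_def by simp
  ultimately have "polygon_lengths \<gamma> a a = {0}" unfolding polygon_lengths_def by fastforce
  then show ?thesis unfolding variation_def by simp
qed

lemma is_partition_min:
  "is_partition a c n p \<Longrightarrow> a \<le> s \<Longrightarrow> s \<le> c \<Longrightarrow> is_partition a s n (\<lambda>k. min (p k) s)"
  unfolding is_partition_def by (auto simp: min_def)

lemma is_partition_max:
  "is_partition a c n p \<Longrightarrow> a \<le> s \<Longrightarrow> s \<le> c \<Longrightarrow> is_partition s c n (\<lambda>k. max (p k) s)"
  unfolding is_partition_def by (auto simp: max_def)

lemma norm_diff_le_min_max:
  fixes \<gamma> :: "real \<Rightarrow> 'a::real_normed_vector"
  assumes "x \<le> y"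
  shows "norm (\<gamma> y - \<gamma> x) \<le> norm (\<gamma> (min y s) - \<gamma> (min x s)) + norm (\<gamma> (max y s) - \<gamma> (max x s))"
  using assms norm_triangle_ineq[of "\<gamma> s - \<gamma> x" "\<gamma> y - \<gamma> s"]
  by (cases "y \<le> s"; cases "x \<le> s") (simp_all add: min_def max_def)

lemma polygon_length_le_min_max:
  "is_partition a c n p \<Longrightarrow>
   polygon_length \<gamma> n p \<le> polygon_length \<gamma> n (\<lambda>k. min (p k) s) + polygon_length \<gamma> n (\<lambda>k. max (p k) s)"
  unfolding polygon_length_def sum.distrib[symmetric] is_partition_def
  by (intro sum_mono norm_diff_le_min_max) auto

lemma variation_add:
  assumes "path_length \<gamma> < \<infinity>" "0 \<le> a" "a \<le> s" "s \<le> c" "c \<le> 1"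
  shows "variation \<gamma> a c = variation \<gamma> a s + variation \<gamma> s c"
proof (rule antisym)
  show "variation \<gamma> a c \<le> variation \<gamma> a s + variation \<gamma> s c"
  proof (rule variation_le)
    fix n p assume p: "is_partition a c n p"
    have "polygon_length \<gamma> n (\<lambda>k. min (p k) s) \<le> variation \<gamma> a s"
      using assms by (intro polygon_length_le_variation is_partition_min[OF p]) auto
    moreover have "polygon_length \<gamma> n (\<lambda>k. max (p k) s) \<le> variation \<gamma> s c"
      using assms by (intro polygon_length_le_variation is_partition_max[OF p]) auto
    ultimately show "polygon_length \<gamma> n p \<le> variation \<gamma> a s + variation \<gamma> s c"
      using polygon_length_le_min_max[OF p, of \<gamma> s] by linarith
  qed (use assms in simp)
  have "polygon_length \<gamma> n p + polygon_length \<gamma> m q \<le> variation \<gamma> a c"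
    if "is_partition a s n p" "is_partition s c m q" for n p m q
    using polygon_length_concat[OF that, of \<gamma>] assms
      polygon_length_le_variation[OF assms(1,2,5) is_partition_concat[OF that]] by simp
  then have "variation \<gamma> a s \<le> variation \<gamma> a c - polygon_length \<gamma> m q"
    if "is_partition s c m q" for m q
    using that assms by (intro variation_le) (auto simp: algebra_simps)
  then have "variation \<gamma> s c \<le> variation \<gamma> a c - variation \<gamma> a s"
    using assms by (intro variation_le) (auto simp: algebra_simps)
  then show "variation \<gamma> a s + variation \<gamma> s c \<le> variation \<gamma> a c" by simp
qed

lemma polygon_length_two_valued:
  assumes "x \<le> y" "\<forall>k<n. q k \<le> q (Suc k)" "\<forall>k\<le>n. q k \<in> {x, y}"
  shows "polygon_length \<gamma> n q \<le> norm (\<gamma> y - \<gamma> x)"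
proof -
  define e :: "nat \<Rightarrow> real" where "e k = (if q k = y then 1 else 0)" for k
  have "norm (\<gamma> (q (Suc k)) - \<gamma> (q k)) \<le> norm (\<gamma> y - \<gamma> x) * (e (Suc k) - e k)" if "k < n" for k
  proof (cases "q k = q (Suc k)")
    case False
    moreover have "q k \<in> {x, y}" "q (Suc k) \<in> {x, y}" "q k \<le> q (Suc k)"
      using assms that by auto
    ultimately have "q k = x" "q (Suc k) = y" "x \<noteq> y" using assms(1) by auto
    then show ?thesis unfolding e_def by simp
  qed (simp add: e_def)
  then have "polygon_length \<gamma> n q \<le> (\<Sum>k<n. norm (\<gamma> y - \<gamma> x) * (e (Suc k) - e k))"
    unfolding polygon_length_def by (intro sum_mono) simp
  also have "\<dots> = norm (\<gamma> y - \<gamma> x) * (e n - e 0)"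
    by (simp add: sum_distrib_left[symmetric] sum_lessThan_telescope)
  also have "\<dots> \<le> norm (\<gamma> y - \<gamma> x)"
    unfolding e_def by (cases "q n = y"; cases "q 0 = y") simp_all
  finally show ?thesis .
qed

lemma polygon_lengths_reflect_subset:
  "polygon_lengths \<gamma> a b \<subseteq> polygon_lengths (\<lambda>t. \<gamma> (c - t)) (c - b) (c - a)"
proof
  fix l assume "l \<in> polygon_lengths \<gamma> a b"
  then obtain n p where l: "l = polygon_length \<gamma> n p" and p: "is_partition a b n p"
    unfolding polygon_lengths_def by blast
  define q where "q i = c - p (n - i)" for i
  have "p (n - Suc k) \<le> p (n - k)" if "k < n" for k
  proof -
    have "n - k = Suc (n - Suc k)" "n - Suc k < n" using that by auto
    then show ?thesis using p unfolding is_partition_def by simp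
  qed
  then have "is_partition (c - b) (c - a) n q"
    using p unfolding is_partition_def q_def by auto
  moreover have "polygon_length \<gamma> n p = polygon_length (\<lambda>t. \<gamma> (c - t)) n q"
  proof -
    have "polygon_length \<gamma> n p = (\<Sum>k<n. norm (\<gamma> (p (Suc (n - Suc k))) - \<gamma> (p (n - Suc k))))"
      unfolding polygon_length_def by (rule sum.nat_diff_reindex[symmetric])
    also have "\<dots> = polygon_length (\<lambda>t. \<gamma> (c - t)) n q"
      unfolding polygon_length_def q_def
      by (intro sum.cong refl) (auto simp: Suc_diff_Suc dist_norm[symmetric] dist_commute)
    finally show ?thesis .
  qed
  ultimately show "l \<in> polygon_lengths (\<lambda>t. \<gamma> (c - t)) (c - b) (c - a)"
    unfolding polygon_lengths_def l by blast
qed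

lemma polygon_lengths_reflect:
  "polygon_lengths (\<lambda>t. \<gamma> (c - t)) (c - b) (c - a) = polygon_lengths \<gamma> a b"
  using polygon_lengths_reflect_subset[of \<gamma> a b c]
    polygon_lengths_reflect_subset[of "\<lambda>t. \<gamma> (c - t)" "c - b" "c - a" c]
  by simp

lemma variation_reflect: "variation (\<lambda>t. \<gamma> (c - t)) (c - b) (c - a) = variation \<gamma> a b"
  unfolding variation_def polygon_lengths_reflect ..

lemma path_length_reversepath: "path_length (reversepath \<gamma>) = path_length \<gamma>"
  using polygon_lengths_reflect[of \<gamma> 1 1 0]
  unfolding path_length_eq_SUP reversepath_def by simp

lemma is_partition_eventually_gap:
  assumes p: "is_partition a b n p"
  shows "\<forall>\<^sub>F s in at_right a. \<forall>i\<in>{..n}. p i = a \<or> s < p i"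
proof (rule eventually_ball_finite)
  show "\<forall>i\<in>{..n}. \<forall>\<^sub>F s in at_right a. p i = a \<or> s < p i"
  proof
    fix i assume "i \<in> {..n}"
    then consider "p i = a" | "a < p i" using is_partition_range[OF p] by force
    then show "\<forall>\<^sub>F s in at_right a. p i = a \<or> s < p i"
    proof cases
      case 2
      then have "\<forall>\<^sub>F s in at_right a. s < p i" by (rule order_tendstoD(2)[OF tendsto_ident_at])
      then show ?thesis by (rule eventually_mono) simp
    qed simp
  qed
qed simp

lemma variation_eventually_small_right:
  assumes rect: "path_length \<gamma> < \<infinity>" and cont: "continuous_on {0..1} \<gamma>"
    and a: "0 \<le> a" "a < 1" and \<eta>: "\<eta> > 0"
  shows "\<forall>\<^sub>F s in at_right a. variation \<gamma> a s < \<eta>"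
proof -
  have "variation \<gamma> a 1 - \<eta>/2 < Sup (polygon_lengths \<gamma> a 1)"
    using \<eta> unfolding variation_def by simp
  moreover have "polygon_lengths \<gamma> a 1 \<noteq> {}"
    using is_partition_trivial[of a 1] a unfolding polygon_lengths_def by auto
  ultimately obtain n p where p: "is_partition a 1 n p"
    and close: "variation \<gamma> a 1 - \<eta>/2 < polygon_length \<gamma> n p"
    by (auto elim!: less_cSupE simp: polygon_lengths_def)
  have gaps: "\<forall>\<^sub>F s in at_right a. \<forall>i\<in>{..n}. p i = a \<or> s < p i"
    using p by (rule is_partition_eventually_gap)
  have "(\<gamma> \<longlongrightarrow> \<gamma> a) (at a within {0..1})"
    using cont a by (simp add: continuous_on)
  then have "(\<gamma> \<longlongrightarrow> \<gamma> a) (at a within {a..1})"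
    by (rule tendsto_within_subset) (use a in auto)
  then have near: "\<forall>\<^sub>F s in at_right a. norm (\<gamma> s - \<gamma> a) < \<eta>/2"
    using \<eta> at_within_Icc_at_right[OF a(2)] by (auto dest!: tendstoD[of _ _ _ "\<eta>/2"] simp: dist_norm)
  have le1: "\<forall>\<^sub>F s in at_right a. s < 1"
    using order_tendstoD(2)[OF tendsto_ident_at a(2)] .
  \<comment> \<open>Once \<open>s\<close> lies below all points of \<open>p\<close> other than \<open>a\<close>, clipping \<open>p\<close> at \<open>s\<close> loses at most
    \<open>norm (\<gamma> s - \<gamma> a)\<close> of its length, which is within \<open>\<eta>/2\<close> of \<open>variation \<gamma> a 1\<close>.\<close>
  show ?thesis
    using gaps near le1 eventually_at_right_less[of a]
  proof eventually_elim
    case (elim s)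
    have "polygon_length \<gamma> n (\<lambda>k. min (p k) s) \<le> norm (\<gamma> s - \<gamma> a)"
      using elim p unfolding is_partition_def
      by (intro polygon_length_two_valued) (auto simp: min_def)
    moreover have "polygon_length \<gamma> n (\<lambda>k. max (p k) s) \<le> variation \<gamma> s 1"
      using elim a by (intro polygon_length_le_variation[OF rect] is_partition_max[OF p]) auto
    moreover have "variation \<gamma> a 1 = variation \<gamma> a s + variation \<gamma> s 1"
      using elim a by (intro variation_add[OF rect]) auto
    ultimately show ?case
      using polygon_length_le_min_max[OF p, of \<gamma> s] close elim by linarith
  qed
qed

lemma variation_eventually_small_left:
  assumes rect: "path_length \<gamma> < \<infinity>" and cont: "continuous_on {0..1} \<gamma>"
    and c: "0 < c" "c \<le> 1" and \<eta>: "\<eta> > 0"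
  shows "\<forall>\<^sub>F s in at_left c. variation \<gamma> s c < \<eta>"
proof -
  have "path_length (\<lambda>t. \<gamma> (1 - t)) < \<infinity>"
    using rect path_length_reversepath[of \<gamma>] unfolding reversepath_def by simp
  moreover have "continuous_on {0..1} (\<lambda>t. \<gamma> (1 - t))"
    using cont path_reversepath[of \<gamma>] unfolding path_def reversepath_def by simp
  ultimately have "\<forall>\<^sub>F s in at_right (1 - c). variation (\<lambda>t. \<gamma> (1 - t)) (1 - c) s < \<eta>"
    using c \<eta> by (intro variation_eventually_small_right) auto
  then obtain b where b: "b > 1 - c"
    "\<And>y. 1 - c < y \<Longrightarrow> y < b \<Longrightarrow> variation (\<lambda>t. \<gamma> (1 - t)) (1 - c) y < \<eta>"
    unfolding eventually_at_right_field by blast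
  have "variation \<gamma> s c < \<eta>" if "1 - b < s" "s < c" for s
    using b(2)[of "1 - s"] variation_reflect[of \<gamma> 1 c s] that by simp
  then show ?thesis
    unfolding eventually_at_left_field using b(1) by (intro exI[of _ "1 - b"]) auto
qed

lemma variation_small_right:
  assumes rect: "path_length \<gamma> < \<infinity>" and cont: "continuous_on {0..1} \<gamma>"
    and x: "0 \<le> x" "x \<le> 1" and e: "e > 0"
  obtains d where "d > 0" "\<And>s. x \<le> s \<Longrightarrow> s \<le> 1 \<Longrightarrow> s < x + d \<Longrightarrow> variation \<gamma> x s < e"
proof (cases "x < 1")
  case True
  then obtain b where "b > x" "\<And>s. x < s \<Longrightarrow> s < b \<Longrightarrow> variation \<gamma> x s < e"
    using variation_eventually_small_right[OF rect cont x(1) True e]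
    unfolding eventually_at_right_field by auto
  then show ?thesis using that[of "b - x"] e by (force simp: le_less variation_refl)
qed (use that[of 1] x e in \<open>force simp: variation_refl\<close>)

lemma variation_small_left:
  assumes rect: "path_length \<gamma> < \<infinity>" and cont: "continuous_on {0..1} \<gamma>"
    and x: "0 \<le> x" "x \<le> 1" and e: "e > 0"
  obtains d where "d > 0" "\<And>s. 0 \<le> s \<Longrightarrow> s \<le> x \<Longrightarrow> x - d < s \<Longrightarrow> variation \<gamma> s x < e"
proof (cases "0 < x")
  case True
  then obtain b where "b < x" "\<And>s. b < s \<Longrightarrow> s < x \<Longrightarrow> variation \<gamma> s x < e"
    using variation_eventually_small_left[OF rect cont True x(2) e]
    unfolding eventually_at_left_field by auto
  then show ?thesis using that[of "x - b"] e by (force simp: le_less variation_refl)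
qed (use that[of 1] x e in \<open>force simp: variation_refl\<close>)

lemma continuous_on_variation:
  assumes rect: "path_length \<gamma> < \<infinity>" and cont: "continuous_on {0..1} \<gamma>"
  shows "continuous_on {0..1} (\<lambda>s. variation \<gamma> 0 s)"
  unfolding continuous_on_iff
proof (intro ballI allI impI)
  fix x e :: real assume x: "x \<in> {0..1}" and e: "0 < e"
  obtain dr where dr: "dr > 0" "\<And>s. x \<le> s \<Longrightarrow> s \<le> 1 \<Longrightarrow> s < x + dr \<Longrightarrow> variation \<gamma> x s < e"
    using variation_small_right[OF rect cont _ _ e] x by auto
  obtain dl where dl: "dl > 0" "\<And>s. 0 \<le> s \<Longrightarrow> s \<le> x \<Longrightarrow> x - dl < s \<Longrightarrow> variation \<gamma> s x < e"
    using variation_small_left[OF rect cont _ _ e] x by auto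
  have "\<bar>variation \<gamma> 0 x' - variation \<gamma> 0 x\<bar> < e"
    if x': "x' \<in> {0..1}" "\<bar>x' - x\<bar> < min dr dl" for x'
  proof (cases "x \<le> x'")
    case True
    then show ?thesis
      using dr(2)[of x'] x x' variation_add[OF rect, of 0 x x'] variation_nonneg[OF rect, of x x'] by auto
  next
    case False
    then show ?thesis
      using dl(2)[of x'] x x' variation_add[OF rect, of 0 x' x] variation_nonneg[OF rect, of x' x] by auto
  qed
  then show "\<exists>d>0. \<forall>x'\<in>{0..1}. dist x' x < d \<longrightarrow> dist (variation \<gamma> 0 x') (variation \<gamma> 0 x) < e"
    using dr(1) dl(1) by (intro exI[of _ "min dr dl"]) (auto simp: dist_real_def)
qed

lemma path_length_subpath_le:
  assumes rect: "path_length \<gamma> < \<infinity>" and st: "0 \<le> s" "s \<le> t" "t \<le> 1"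
  shows "path_length (subpath s t \<gamma>) \<le> ereal (variation \<gamma> s t)"
  unfolding path_length_eq_SUP
proof (rule SUP_least)
  fix l assume "l \<in> polygon_lengths (subpath s t \<gamma>) 0 1"
  then obtain n p where l: "l = polygon_length (subpath s t \<gamma>) n p" and p: "is_partition 0 1 n p"
    unfolding polygon_lengths_def by blast
  have "is_partition s t n (\<lambda>i. (t - s) * p i + s)"
    using p st unfolding is_partition_def by (auto intro: mult_left_mono)
  then have "polygon_length \<gamma> n (\<lambda>i. (t - s) * p i + s) \<le> variation \<gamma> s t"
    using st by (intro polygon_length_le_variation[OF rect]) auto
  then show "ereal l \<le> ereal (variation \<gamma> s t)"
    unfolding l polygon_length_def subpath_def by simp
qed

lemma intrinsic_dist_commute: "intrinsic_dist \<Omega> x y = intrinsic_dist \<Omega> y x"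
proof -
  have "intrinsic_dist \<Omega> x y \<le> intrinsic_dist \<Omega> y x" for x y
    unfolding intrinsic_dist_def
  proof (rule INF_greatest)
    fix \<gamma> assume "\<gamma> \<in> {\<gamma>. path \<gamma> \<and> path_image \<gamma> \<subseteq> closure \<Omega> \<and> pathstart \<gamma> = y \<and> pathfinish \<gamma> = x}"
    then show "(INF \<gamma>\<in>{\<gamma>. path \<gamma> \<and> path_image \<gamma> \<subseteq> closure \<Omega> \<and> pathstart \<gamma> = x \<and> pathfinish \<gamma> = y}.
        path_length \<gamma>) \<le> path_length \<gamma>"
      by (intro INF_lower2[of "reversepath \<gamma>"]) (auto simp: path_length_reversepath)
  qed
  then show ?thesis by (simp add: antisym)
qed

lemma intrinsic_dist_le_variation:
  assumes "path \<gamma>" "path_image \<gamma> \<subseteq> closure \<Omega>" "path_length \<gamma> < \<infinity>" "0 \<le> s" "s \<le> t" "t \<le> 1"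
  shows "intrinsic_dist \<Omega> (\<gamma> s) (\<gamma> t) \<le> ereal (variation \<gamma> s t)"
proof -
  have "intrinsic_dist \<Omega> (\<gamma> s) (\<gamma> t) \<le> path_length (subpath s t \<gamma>)"
    unfolding intrinsic_dist_def using assms path_image_subpath_subset[of s t \<gamma>]
    by (intro INF_lower) (auto intro: path_subpath)
  also have "\<dots> \<le> ereal (variation \<gamma> s t)"
    using assms by (intro path_length_subpath_le) auto
  finally show ?thesis .
qed

inductive boundary_chain :: "'a::euclidean_space set \<Rightarrow> real \<Rightarrow> 'a \<Rightarrow> nat \<Rightarrow> bool"
  for \<Omega> \<epsilon> where
  boundary_chain_frontier: "x \<in> frontier \<Omega> \<Longrightarrow> boundary_chain \<Omega> \<epsilon> x 0"
| boundary_chain_step: "x \<in> closure \<Omega> \<Longrightarrow> intrinsic_dist \<Omega> x y < ereal \<epsilon> \<Longrightarrow>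
    boundary_chain \<Omega> \<epsilon> y k \<Longrightarrow> boundary_chain \<Omega> \<epsilon> x (Suc k)"

lemma boundary_chain_in_closure: "boundary_chain \<Omega> \<epsilon> x k \<Longrightarrow> x \<in> closure \<Omega>"
  by (induction rule: boundary_chain.induct) (auto simp: frontier_def)

lemma boundary_chain_along_path:
  assumes \<gamma>: "path \<gamma>" "path_image \<gamma> \<subseteq> closure \<Omega>" "pathstart \<gamma> \<in> frontier \<Omega>"
    and rect: "path_length \<gamma> < \<infinity>" and \<epsilon>: "\<epsilon> > 0"
  shows "t \<in> {0..1} \<Longrightarrow> variation \<gamma> 0 t \<le> real m * \<epsilon> / 2 \<Longrightarrow> \<exists>k\<le>m+1. boundary_chain \<Omega> \<epsilon> (\<gamma> t) k"
proof (induction m arbitrary: t)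
  have step: "boundary_chain \<Omega> \<epsilon> (\<gamma> t) (Suc k)"
    if "0 \<le> s" "s \<le> t" "t \<le> 1" "variation \<gamma> s t < \<epsilon>" "boundary_chain \<Omega> \<epsilon> (\<gamma> s) k" for s t k
  proof (rule boundary_chain_step)
    show "\<gamma> t \<in> closure \<Omega>" using \<gamma>(2) that unfolding path_image_def by auto
    show "intrinsic_dist \<Omega> (\<gamma> t) (\<gamma> s) < ereal \<epsilon>"
      unfolding intrinsic_dist_commute[of \<Omega> "\<gamma> t"]
      using that(4) by (intro order.strict_trans1[OF intrinsic_dist_le_variation[OF \<gamma>(1,2) rect that(1-3)]]) simp
  qed fact
  have start: "boundary_chain \<Omega> \<epsilon> (\<gamma> 0) 0"
    using \<gamma>(3) unfolding pathstart_def by (rule boundary_chain_frontier)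
  {
    case 0
    then show ?case using step[OF _ _ _ _ start, of t] \<epsilon> by auto
  next
    case (Suc m)
    let ?V = "\<lambda>s. variation \<gamma> 0 s"
    have t: "0 \<le> t" "t \<le> 1" using Suc.prems(1) by auto
    have cont: "continuous_on {0..t} ?V"
      using continuous_on_variation[OF rect] \<gamma>(1) t unfolding path_def
      by (auto elim: continuous_on_subset)
    have lo: "?V 0 \<le> max 0 (?V t - \<epsilon>/2)" and hi: "max 0 (?V t - \<epsilon>/2) \<le> ?V t"
      using variation_nonneg[OF rect, of 0 t] t \<epsilon> by (auto simp: variation_refl)
    obtain s where s: "0 \<le> s" "s \<le> t" "?V s = max 0 (?V t - \<epsilon>/2)"
      using IVT'[OF lo hi t(1) cont] by blast
    have "?V t = ?V s + variation \<gamma> s t"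
      using s t by (intro variation_add[OF rect]) auto
    moreover have "0 \<le> real m * \<epsilon>" using \<epsilon> by simp
    ultimately have "variation \<gamma> s t < \<epsilon>" "?V s \<le> real m * \<epsilon> / 2"
      using s(3) Suc.prems(2) \<epsilon> by (auto simp: max_def algebra_simps split: if_splits)
    then obtain k where "k \<le> m + 1" "boundary_chain \<Omega> \<epsilon> (\<gamma> s) k"
      using Suc.IH[of s] s t by auto
    then show ?case using step[of s t k] s t \<open>variation \<gamma> s t < \<epsilon>\<close> by (intro exI[of _ "Suc k"]) auto
  }
qed

lemma boundary_chain_exists:
  assumes width: "width \<Omega> < ereal L" and \<epsilon>: "\<epsilon> > 0" and x: "x \<in> closure \<Omega>"
  shows "\<exists>k \<le> nat \<lceil>2 * L / \<epsilon>\<rceil> + 1. boundary_chain \<Omega> \<epsilon> x k"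
proof (cases "x \<in> frontier \<Omega>")
  case True
  then show ?thesis using boundary_chain_frontier by blast
next
  case False
  then have "x \<in> \<Omega>" using x closure_Un_frontier[of \<Omega>] by auto
  then have "(INF y\<in>frontier \<Omega>. intrinsic_dist \<Omega> y x) < ereal L"
    using width unfolding width_def by (meson SUP_upper order.strict_trans1)
  then obtain z where z: "z \<in> frontier \<Omega>" "intrinsic_dist \<Omega> z x < ereal L"
    by (auto simp: INF_less_iff)
  then obtain \<gamma> where \<gamma>: "path \<gamma>" "path_image \<gamma> \<subseteq> closure \<Omega>" "pathstart \<gamma> = z" "pathfinish \<gamma> = x"
    and len: "path_length \<gamma> < ereal L"
    unfolding intrinsic_dist_def by (auto simp: INF_less_iff)
  have "variation \<gamma> 0 1 \<le> L"
  proof (rule variation_le)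
    fix n p assume "is_partition 0 1 n p"
    then have "ereal (polygon_length \<gamma> n p) \<le> path_length \<gamma>"
      by (intro polygon_length_le_path_length) auto
    then have "ereal (polygon_length \<gamma> n p) < ereal L"
      using len by (rule order.strict_trans1)
    then show "polygon_length \<gamma> n p \<le> L" by simp
  qed simp
  also have "L \<le> real (nat \<lceil>2 * L / \<epsilon>\<rceil>) * \<epsilon> / 2"
    using real_nat_ceiling_ge[of "2 * L / \<epsilon>"] \<epsilon> by (simp add: field_simps)
  finally have "variation \<gamma> 0 1 \<le> real (nat \<lceil>2 * L / \<epsilon>\<rceil>) * \<epsilon> / 2" .
  moreover have "path_length \<gamma> < \<infinity>"
    using len by auto
  ultimately show ?thesis
    using boundary_chain_along_path[OF \<gamma>(1,2) _ _ \<epsilon>, of 1] \<gamma>(3,4) z(1)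
    unfolding pathfinish_def by auto
qed

definition boundary_steps :: "'a::euclidean_space set \<Rightarrow> real \<Rightarrow> 'a \<Rightarrow> nat" where
  "boundary_steps \<Omega> \<epsilon> x = (LEAST k. boundary_chain \<Omega> \<epsilon> x k)"

lemma boundary_chain_boundary_steps:
  "boundary_chain \<Omega> \<epsilon> x k \<Longrightarrow> boundary_chain \<Omega> \<epsilon> x (boundary_steps \<Omega> \<epsilon> x)"
  unfolding boundary_steps_def by (rule LeastI)

lemma boundary_steps_le: "boundary_chain \<Omega> \<epsilon> x k \<Longrightarrow> boundary_steps \<Omega> \<epsilon> x \<le> k"
  unfolding boundary_steps_def by (rule Least_le)

lemma boundary_steps_intr_ball:
  assumes "y \<in> intr_ball \<Omega> x \<epsilon>" "boundary_chain \<Omega> \<epsilon> x k"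
  shows "boundary_steps \<Omega> \<epsilon> y \<le> Suc k"
  using assms by (auto intro!: boundary_steps_le boundary_chain_step
      simp: intr_ball_def intrinsic_dist_commute[of \<Omega> y])

lemma boundary_chain_SucE:
  assumes "boundary_chain \<Omega> \<epsilon> x (Suc k)"
  obtains z where "z \<in> intr_ball \<Omega> x \<epsilon>" "boundary_chain \<Omega> \<epsilon> z k"
  using assms by cases (auto simp: intr_ball_def dest: boundary_chain_in_closure)

definition barrier :: "real \<Rightarrow> nat \<Rightarrow> nat \<Rightarrow> real" where
  "barrier c K k = c * real k * (2 * real K + 2 - real k)"

lemma barrier_mono:
  assumes "0 \<le> c" "i \<le> j" "j \<le> K + 1"
  shows "barrier c K i \<le> barrier c K j"
proof -
  have "barrier c K j - barrier c K i = c * (real j - real i) * (2 * real K + 2 - real i - real j)"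
    unfolding barrier_def by (simp add: algebra_simps)
  also have "\<dots> \<ge> 0" using assms by (intro mult_nonneg_nonneg) auto
  finally show ?thesis by simp
qed

lemma barrier_second_difference:
  "barrier c K k + barrier c K (Suc (Suc k)) = 2 * barrier c K (Suc k) - 2 * c"
  unfolding barrier_def by (simp add: algebra_simps)

lemma barrier_top: "barrier c K (K + 1) = c * (real K + 1)\<^sup>2"
  unfolding barrier_def by (simp add: algebra_simps power2_eq_square)

lemma eps_laplacian_le:
  assumes "bdd_below (u ` intr_ball \<Omega> x \<epsilon>)" "z \<in> intr_ball \<Omega> x \<epsilon>"
    "\<And>y. y \<in> intr_ball \<Omega> x \<epsilon> \<Longrightarrow> u y \<le> A"
  shows "eps_laplacian \<Omega> \<epsilon> u x \<le> u z + A - 2 * u x"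
proof -
  have "(INF y\<in>intr_ball \<Omega> x \<epsilon>. u y) \<le> u z"
    using assms by (intro cInf_lower) auto
  moreover have "(SUP y\<in>intr_ball \<Omega> x \<epsilon>. u y) \<le> A"
    using assms by (intro cSup_least) auto
  ultimately show ?thesis unfolding eps_laplacian_def by simp
qed

lemma eps_laplacian_uminus: "eps_laplacian \<Omega> \<epsilon> (\<lambda>y. - u y) x = - eps_laplacian \<Omega> \<epsilon> u x"
  unfolding eps_laplacian_def by (simp add: Inf_real_def image_image)

lemma eps_laplacian_le_barrier:
  fixes u :: "'a::euclidean_space \<Rightarrow> real"
  assumes c: "0 \<le> c" and bdd: "bounded (u ` closure \<Omega>)"
    and le_S: "\<And>y. y \<in> closure \<Omega> \<Longrightarrow> u y - barrier c K (boundary_steps \<Omega> \<epsilon> y) \<le> S"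
    and chain: "boundary_chain \<Omega> \<epsilon> x (Suc k)" and k: "Suc k \<le> K"
  shows "eps_laplacian \<Omega> \<epsilon> u x \<le> 2 * (S - u x + barrier c K (Suc k)) - 2 * c"
proof -
  have ball: "intr_ball \<Omega> x \<epsilon> \<subseteq> closure \<Omega>" unfolding intr_ball_def by auto
  obtain z where z: "z \<in> intr_ball \<Omega> x \<epsilon>" "boundary_chain \<Omega> \<epsilon> z k"
    using chain by (rule boundary_chain_SucE)
  have "u z \<le> S + barrier c K k"
    using le_S[of z] ball z barrier_mono[OF c boundary_steps_le[OF z(2)], of K] k by force
  moreover have "u y \<le> S + barrier c K (Suc (Suc k))" if "y \<in> intr_ball \<Omega> x \<epsilon>" for y
    using le_S[of y] ball that barrier_mono[OF c boundary_steps_intr_ball[OF that chain], of K] k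
    by force
  moreover obtain M where "\<And>y. y \<in> closure \<Omega> \<Longrightarrow> \<bar>u y\<bar> \<le> M"
    using bdd unfolding bounded_real by auto
  then have "bdd_below (u ` intr_ball \<Omega> x \<epsilon>)"
    using ball by (intro bdd_belowI2[where m = "- M"]) (force simp: abs_le_iff)
  ultimately show ?thesis
    using eps_laplacian_le[of u \<Omega> x \<epsilon> z] z(1) barrier_second_difference[of c K k] by fastforce
qed

lemma eps_subsolution_le_barrier:
  fixes u :: "'a::euclidean_space \<Rightarrow> real"
  assumes \<epsilon>: "\<epsilon> > 0" and F: "0 \<le> F"
    and chains: "\<And>y. y \<in> closure \<Omega> \<Longrightarrow> \<exists>k\<le>K. boundary_chain \<Omega> \<epsilon> y k"
    and bdd: "bounded (u ` closure \<Omega>)"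
    and sub: "\<And>y. y \<in> \<Omega> \<Longrightarrow> -(\<epsilon>\<^sup>2 * F) \<le> eps_laplacian \<Omega> \<epsilon> u y"
    and bdry: "\<And>y. y \<in> frontier \<Omega> \<Longrightarrow> u y \<le> G"
    and x: "x \<in> closure \<Omega>"
  shows "u x \<le> G + barrier (\<epsilon>\<^sup>2 * (F + 1)) K (boundary_steps \<Omega> \<epsilon> x)"
proof -
  define c where "c = \<epsilon>\<^sup>2 * (F + 1)"
  define N where "N = boundary_steps \<Omega> \<epsilon>"
  define w where "w y = u y - barrier c K (N y)" for y
  have c: "c = \<epsilon>\<^sup>2 * F + \<epsilon>\<^sup>2" "0 < \<epsilon>\<^sup>2" "0 < c"
    unfolding c_def using \<epsilon> F by (simp_all add: algebra_simps add_pos_nonneg)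
  have N: "boundary_chain \<Omega> \<epsilon> y (N y)" "N y \<le> K" if "y \<in> closure \<Omega>" for y
    using chains[OF that] boundary_chain_boundary_steps boundary_steps_le unfolding N_def
    by (blast, force)
  have barrier_N_nonneg: "0 \<le> barrier c K (N y)" if "y \<in> closure \<Omega>" for y
    using barrier_mono[of c 0 "N y" K] N(2)[OF that] c(3) by (simp add: barrier_def)
  obtain M where M: "\<And>y. y \<in> closure \<Omega> \<Longrightarrow> \<bar>u y\<bar> \<le> M"
    using bdd unfolding bounded_real by auto
  have "bdd_above (w ` closure \<Omega>)"
    using M barrier_N_nonneg unfolding w_def by (intro bdd_aboveI2[where M = M]) force
  define S where "S = Sup (w ` closure \<Omega>)"
  have w_le_S: "w y \<le> S" if "y \<in> closure \<Omega>" for y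
    unfolding S_def using \<open>bdd_above _\<close> that by (intro cSup_upper) auto
  have "w x \<le> G"
  proof (rule ccontr)
    assume "\<not> w x \<le> G"
    then have GS: "G < S" using w_le_S[OF x] by simp
    define \<eta> where "\<eta> = min (S - G) c / 2"
    have \<eta>: "0 < \<eta>" "\<eta> \<le> c / 2" "\<eta> \<le> (S - G) / 2" unfolding \<eta>_def using GS c(3) by auto
    have "S - \<eta> < Sup (w ` closure \<Omega>)" "w ` closure \<Omega> \<noteq> {}"
      using \<eta>(1) x unfolding S_def by auto
    then obtain x1 where x1: "x1 \<in> closure \<Omega>" "S - \<eta> < w x1"
      by (blast elim: less_cSupE)
    then have "x1 \<notin> frontier \<Omega>"
      using bdry barrier_N_nonneg \<eta>(3) GS unfolding w_def by force
    then have "x1 \<in> \<Omega>" using x1(1) closure_Un_frontier[of \<Omega>] by auto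
    obtain k where k: "N x1 = Suc k"
      using N(1)[OF x1(1)] \<open>x1 \<notin> frontier \<Omega>\<close> by (cases "N x1") (auto elim: boundary_chain.cases)
    have "eps_laplacian \<Omega> \<epsilon> u x1 \<le> 2 * (S - w x1) - 2 * c"
      using eps_laplacian_le_barrier[OF _ bdd, of c K \<epsilon> S x1 k]
        w_le_S N[OF x1(1)] k c(3) unfolding w_def N_def by simp
    then show False
      using sub[OF \<open>x1 \<in> \<Omega>\<close>] x1(2) \<eta>(2) c(1,2) by argo
  qed
  then show ?thesis unfolding w_def N_def c_def by simp
qed

lemma eps_subsolution_bound:
  fixes u :: "'a::euclidean_space \<Rightarrow> real"
  assumes width: "width \<Omega> < ereal L" and L: "0 \<le> L" and \<epsilon>: "\<epsilon> > 0" and F: "0 \<le> F"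
    and bdd: "bounded (u ` closure \<Omega>)"
    and sub: "\<And>y. y \<in> \<Omega> \<Longrightarrow> -(\<epsilon>\<^sup>2 * F) \<le> eps_laplacian \<Omega> \<epsilon> u y"
    and bdry: "\<And>y. y \<in> frontier \<Omega> \<Longrightarrow> u y \<le> G"
    and x: "x \<in> closure \<Omega>"
  shows "u x \<le> G + (F + 1) * (2 * L + 3 * \<epsilon>)\<^sup>2"
proof -
  define K where "K = nat \<lceil>2 * L / \<epsilon>\<rceil> + 1"
  have chains: "\<And>y. y \<in> closure \<Omega> \<Longrightarrow> \<exists>k\<le>K. boundary_chain \<Omega> \<epsilon> y k"
    unfolding K_def using boundary_chain_exists[OF width \<epsilon>] by blast
  have "boundary_steps \<Omega> \<epsilon> x \<le> K"
    using chains[OF x] boundary_steps_le order_trans by blast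
  then have "barrier (\<epsilon>\<^sup>2 * (F + 1)) K (boundary_steps \<Omega> \<epsilon> x) \<le> barrier (\<epsilon>\<^sup>2 * (F + 1)) K (K + 1)"
    using F by (intro barrier_mono) auto
  also have "\<dots> = (F + 1) * (\<epsilon> * (real K + 1))\<^sup>2"
    unfolding barrier_top by (simp add: power_mult_distrib)
  also have "\<dots> \<le> (F + 1) * (2 * L + 3 * \<epsilon>)\<^sup>2"
  proof -
    have "0 \<le> 2 * L / \<epsilon>" using L \<epsilon> by simp
    then have "real K + 1 \<le> 2 * L / \<epsilon> + 3"
      unfolding K_def by (simp add: of_nat_nat) (use of_int_ceiling_le_add_one[of "2 * L / \<epsilon>"] in linarith)
    then have "\<epsilon> * (real K + 1) \<le> 2 * L + 3 * \<epsilon>"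
      using \<epsilon> by (simp add: field_simps)
    then show ?thesis using F \<epsilon> by (intro mult_left_mono power_mono) auto
  qed
  finally show ?thesis
    using eps_subsolution_le_barrier[OF \<epsilon> F chains bdd sub bdry x] by simp
qed

lemma eps_solution_bound:
  fixes u :: "'a::euclidean_space \<Rightarrow> real"
  assumes width: "width \<Omega> < ereal L" and L: "0 \<le> L" and \<epsilon>: "\<epsilon> > 0" and F: "0 \<le> F"
    and bdd: "bounded (u ` closure \<Omega>)"
    and eq: "\<And>y. y \<in> \<Omega> \<Longrightarrow> \<bar>eps_laplacian \<Omega> \<epsilon> u y\<bar> \<le> \<epsilon>\<^sup>2 * F"
    and bdry: "\<And>y. y \<in> frontier \<Omega> \<Longrightarrow> \<bar>u y\<bar> \<le> G"
    and x: "x \<in> closure \<Omega>"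
  shows "\<bar>u x\<bar> \<le> G + (F + 1) * (2 * L + 3 * \<epsilon>)\<^sup>2"
proof -
  have "u x \<le> G + (F + 1) * (2 * L + 3 * \<epsilon>)\<^sup>2"
    using eq bdry by (intro eps_subsolution_bound[OF width L \<epsilon> F bdd _ _ x]) (force simp: abs_le_iff)+
  moreover have "- u x \<le> G + (F + 1) * (2 * L + 3 * \<epsilon>)\<^sup>2"
    using eq bdry bdd
    by (intro eps_subsolution_bound[OF width L \<epsilon> F _ _ _ x])
       (force simp: abs_le_iff eps_laplacian_uminus uminus_bounded_comp)+
  ultimately show ?thesis by simp
qed

theorem lemma5p1:
  fixes \<Omega> :: "'a::euclidean_space set"
    and f g :: "'a \<Rightarrow> real"
    and \<epsilon> :: "nat \<Rightarrow> real"
    and u :: "nat \<Rightarrow> 'a \<Rightarrow> real"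
  assumes domain: "open \<Omega>" "connected \<Omega>"
    and width_fin: "width \<Omega> < \<infinity>"
    and f_meas: "f \<in> borel_measurable (lebesgue_on \<Omega>)"
    and f_bdd: "bounded (f ` \<Omega>)"
    and g_cont: "continuous_on (frontier \<Omega>) g"
    and g_bdd: "bounded (g ` frontier \<Omega>)"
    and eps_pos: "\<And>i. \<epsilon> i > 0"
    and eps_lim: "\<epsilon> \<longlonglongrightarrow> 0"
    and u_bdd: "\<And>i. bounded (u i ` closure \<Omega>)"
    and u_eq: "\<And>i x. x \<in> \<Omega> \<Longrightarrow> eps_laplacian \<Omega> (\<epsilon> i) (u i) x = (\<epsilon> i)\<^sup>2 * f x"
    and u_bdry: "\<And>i x. x \<in> frontier \<Omega> \<Longrightarrow> u i x = g x"
  shows "\<exists>M. \<forall>i. \<forall>x \<in> closure \<Omega>. \<bar>u i x\<bar> \<le> M"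
proof -
  obtain F0 where F0: "\<And>x. x \<in> \<Omega> \<Longrightarrow> \<bar>f x\<bar> \<le> F0"
    using f_bdd unfolding bounded_real by auto
  define F where "F = max F0 0"
  obtain G where G: "\<And>x. x \<in> frontier \<Omega> \<Longrightarrow> \<bar>g x\<bar> \<le> G"
    using g_bdd unfolding bounded_real by auto
  obtain E where E: "\<And>i. \<epsilon> i \<le> E"
    using convergent_imp_Bseq[OF convergentI[OF eps_lim]] by (metis BseqE abs_le_D1 real_norm_def)
  obtain L :: nat where L: "width \<Omega> < ereal L"
    using width_fin less_PInf_Ex_of_nat[of "width \<Omega>"] by auto
  have "\<bar>u i x\<bar> \<le> G + (F + 1) * (2 * real L + 3 * E)\<^sup>2" if x: "x \<in> closure \<Omega>" for i x
  proof -
    have "\<bar>eps_laplacian \<Omega> (\<epsilon> i) (u i) y\<bar> \<le> (\<epsilon> i)\<^sup>2 * F" if "y \<in> \<Omega>" for y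
      using u_eq[OF that] F0[OF that] unfolding F_def by (simp add: abs_mult mult_left_mono)
    then have "\<bar>u i x\<bar> \<le> G + (F + 1) * (2 * real L + 3 * \<epsilon> i)\<^sup>2"
      using G u_bdry unfolding F_def by (intro eps_solution_bound[OF L _ eps_pos _ u_bdd _ _ x]) auto
    also have "\<dots> \<le> G + (F + 1) * (2 * real L + 3 * E)\<^sup>2"
      using E[of i] eps_pos[of i] unfolding F_def by (intro add_left_mono mult_left_mono power_mono) auto
    finally show ?thesis .
  qed
  then show ?thesis by blast
qed

end
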